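(* For every cograph $(V,E)$ there are $d<\omega$ and an injective function $f:V\to(2^2)^d$ such that for all distinct $v_0,v_1\in V$: $v_0\mathrel{E}v_1$ if and only if $\{f(v_0),f(v_1)\}$ is an up-$1$-comb, and $\neg\, v_0\mathrel{E}v_1$ if and only if $\{f(v_0),f(v_1)\}$ is a wide right-$1$-comb.
   Context: Cographs: for graphs $G_0=(V_0,E_0),G_1=(V_1,E_1)$ on disjoint vertex sets, the coproduct is $(V_0\cup V_1,E_0\cup E_1)$ and the graph join is $(V_0\cup V_1,E_0\cup E_1\cup\{\{a,b\}:a\in V_0,b\in V_1\})$; cographs form the smallest class of graphs containing the one-vertex graph and closed (up to isomorphism) under coproducts and graph joins. $2^2=\{0,1\}^2$; $(2^2)^d$ is the set of sequences of length $d$ with entries in $2^2$, $(2^2)^{<d}$ those of length $<d$, $\tau^\frown a$ concatenation. For $A,B\subseteq(2^2)^d$: $A$ narrowly below $B$: some $\tau\in(2^2)^{<d}$, $i<2$ with all elements of $A$ extending $\tau^\frown(i,0)$ and all of $B$ extending $\tau^\frown(i,1)$; $A$ narrowly to the left of $B$: some $\tau$, $j<2$ with $A$'s extending $\tau^\frown(0,j)$ and $B$'s extending $\tau^\frown(1,j)$; $A$ widely to the left of $B$: some $\sigma$ with $A$'s extending $\sigma^\frown(0,0)$ or $\sigma^\frown(0,1)$ and $B$'s extending $\sigma^\frown(1,0)$ or $\sigma^\frown(1,1)$. Up-$1$-combs: smallest class of finite sets containing singletons and containing $A\cup B$ whenever $A,B$ are up-$1$-combs, $|A|\le 1$, $A$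 narrowly below $B$; right-$1$-combs likewise with narrowly left; wide right-$1$-combs: smallest class containing singletons and containing $A\cup B$ whenever $A,B$ are right-$1$-combs, $|A|\le1$, $A$ widely left of $B$. *)

theory Defs
  imports Main "HOL-Library.Sublist"
begin

text \<open>A graph is a pair (V,E) with E a set of two-element subsets {a,b} of V.
  v0 E v1 means {v0,v1} \<in> E.\<close>

definition coproduct_edges :: "'a set set \<Rightarrow> 'a set set \<Rightarrow> 'a set set" where
  "coproduct_edges E0 E1 = E0 \<union> E1"

definition join_edges :: "'a set \<Rightarrow> 'a set set \<Rightarrow> 'a set \<Rightarrow> 'a set set \<Rightarrow> 'a set set" where
  "join_edges V0 E0 V1 E1 = E0 \<union> E1 \<union> {{a, b} | a b. a \<in> V0 \<and> b \<in> V1}"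

inductive cograph :: "'a set \<Rightarrow> 'a set set \<Rightarrow> bool" where
  single: "cograph {v} {}"
| coprod: "\<lbrakk>cograph V0 E0; cograph V1 E1; V0 \<inter> V1 = {}\<rbrakk>
            \<Longrightarrow> cograph (V0 \<union> V1) (coproduct_edges E0 E1)"
| join: "\<lbrakk>cograph V0 E0; cograph V1 E1; V0 \<inter> V1 = {}\<rbrakk>
            \<Longrightarrow> cograph (V0 \<union> V1) (join_edges V0 E0 V1 E1)"

definition two2 :: "(nat \<times> nat) set" where
  "two2 = {0, 1} \<times> {0, 1}"

definition seqs :: "nat \<Rightarrow> (nat \<times> nat) list set" where
  "seqs d = {s. length s = d \<and> set s \<subseteq> two2}"

definition seqs_lt :: "nat \<Rightarrow> (nat \<times> nat) list set" where
  "seqs_lt d = {s. length s < d \<and> set s \<subseteq> two2}"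

definition narrowly_below :: "nat \<Rightarrow> (nat \<times> nat) list set \<Rightarrow> (nat \<times> nat) list set \<Rightarrow> bool" where
  "narrowly_below d A B \<longleftrightarrow> (\<exists>\<tau> i. \<tau> \<in> seqs_lt d \<and> i < 2 \<and>
      (\<forall>a\<in>A. prefix (\<tau> @ [(i, 0)]) a) \<and> (\<forall>b\<in>B. prefix (\<tau> @ [(i, 1)]) b))"

definition narrowly_left :: "nat \<Rightarrow> (nat \<times> nat) list set \<Rightarrow> (nat \<times> nat) list set \<Rightarrow> bool" where
  "narrowly_left d A B \<longleftrightarrow> (\<exists>\<tau> j. \<tau> \<in> seqs_lt d \<and> j < 2 \<and>
      (\<forall>a\<in>A. prefix (\<tau> @ [(0, j)]) a) \<and> (\<forall>b\<in>B. prefix (\<tau> @ [(1, j)]) b))"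

definition widely_left :: "nat \<Rightarrow> (nat \<times> nat) list set \<Rightarrow> (nat \<times> nat) list set \<Rightarrow> bool" where
  "widely_left d A B \<longleftrightarrow> (\<exists>\<sigma>. \<sigma> \<in> seqs_lt d \<and>
      (\<forall>a\<in>A. prefix (\<sigma> @ [(0, 0)]) a \<or> prefix (\<sigma> @ [(0, 1)]) a) \<and>
      (\<forall>b\<in>B. prefix (\<sigma> @ [(1, 0)]) b \<or> prefix (\<sigma> @ [(1, 1)]) b))"

inductive up_comb :: "nat \<Rightarrow> (nat \<times> nat) list set \<Rightarrow> bool" for d where
  single: "s \<in> seqs d \<Longrightarrow> up_comb d {s}"
| step: "\<lbrakk>up_comb d A; up_comb d B; card A \<le> 1; narrowly_below d A B\<rbrakk>
           \<Longrightarrow> up_comb d (A \<union> B)"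

inductive right_comb :: "nat \<Rightarrow> (nat \<times> nat) list set \<Rightarrow> bool" for d where
  single: "s \<in> seqs d \<Longrightarrow> right_comb d {s}"
| step: "\<lbrakk>right_comb d A; right_comb d B; card A \<le> 1; narrowly_left d A B\<rbrakk>
           \<Longrightarrow> right_comb d (A \<union> B)"

inductive wide_right_comb :: "nat \<Rightarrow> (nat \<times> nat) list set \<Rightarrow> bool" for d where
  single: "s \<in> seqs d \<Longrightarrow> wide_right_comb d {s}"
| step: "\<lbrakk>right_comb d A; right_comb d B; card A \<le> 1; widely_left d A B\<rbrakk>
           \<Longrightarrow> wide_right_comb d (A \<union> B)"

end

theory Submission
  imports Defs
begin

text \<open>Two distinct sequences of equal length form an up-comb exactly when the letters at
  their first difference are (i,0) and (i,1), and a wide right-comb exactly when these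
  letters have first coordinates 0 and 1; the position of the first difference is unique,
  so the two cases exclude each other. A cograph is embedded by induction: the two parts of
  a coproduct are placed below the letters (0,0) and (1,0), those of a join below (0,0)
  and (0,1), and the shorter codes are padded to a common length. Below the new first
  letter, pairs from the same part keep their first difference.\<close>

definition branches :: "'a list \<Rightarrow> 'a list \<Rightarrow> 'a \<Rightarrow> 'a \<Rightarrow> bool" where
  "branches x y c c' \<longleftrightarrow> (\<exists>\<tau> r s. x = \<tau> @ c # r \<and> y = \<tau> @ c' # s)"

lemma branches_Cons: "branches (c # p) (c' # q) c c'"
  unfolding branches_def by (rule exI[of _ "[]"]) simp

lemma branches_Cons_append: "branches x y c c' \<Longrightarrow> branches (a # x @ p) (a # y @ q) c c'"
  unfolding branches_def by (metis append_Cons append_assoc append.simps(2))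

lemma branches_unique:
  assumes "branches x y c c'" "c \<noteq> c'" "branches x y e e'" "e \<noteq> e'"
  shows "c = e \<and> c' = e'"
proof -
  obtain \<tau> r s where x: "x = \<tau> @ c # r" and y: "y = \<tau> @ c' # s"
    using assms(1) unfolding branches_def by blast
  obtain \<sigma> r' s' where x': "x = \<sigma> @ e # r'" and y': "y = \<sigma> @ e' # s'"
    using assms(3) unfolding branches_def by blast
  have "\<not> length \<tau> < length \<sigma>"
  proof
    assume "length \<tau> < length \<sigma>"
    then have "x ! length \<tau> = y ! length \<tau>" using x' y' by (simp add: nth_append)
    then show False using x y assms(2) by (simp add: nth_append)
  qed
  moreover have "\<not> length \<sigma> < length \<tau>"
  proof
    assume "length \<sigma> < length \<tau>"
    then have "x ! length \<sigma> = y ! length \<sigma>" using x y by (simp add: nth_append)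
    then show False using x' y' assms(4) by (simp add: nth_append)
  qed
  ultimately have "length \<tau> = length \<sigma>" by simp
  then show ?thesis using x y x' y' by (metis nth_append_length)
qed

lemma branches_swap: "branches y x c' c \<longleftrightarrow> branches x y c c'"
  unfolding branches_def by blast

lemma branches_iff_prefixes:
  "branches x y c c' \<longleftrightarrow> (\<exists>\<tau>. prefix (\<tau> @ [c]) x \<and> prefix (\<tau> @ [c']) y)"
  unfolding branches_def prefix_def by auto

lemma branches_neq: "branches x y c c' \<Longrightarrow> c \<noteq> c' \<Longrightarrow> x \<noteq> y"
  unfolding branches_def by auto

definition up_pair :: "(nat \<times> nat) list \<Rightarrow> (nat \<times> nat) list \<Rightarrow> bool" where
  "up_pair x y \<longleftrightarrow> (\<exists>i. branches x y (i, 0) (i, 1) \<or> branches y x (i, 0) (i, 1))"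

definition wide_pair :: "(nat \<times> nat) list \<Rightarrow> (nat \<times> nat) list \<Rightarrow> bool" where
  "wide_pair x y \<longleftrightarrow> (\<exists>a b. branches x y (0, a) (1, b) \<or> branches y x (0, a) (1, b))"

lemma up_pair_sym: "up_pair x y \<Longrightarrow> up_pair y x"
  unfolding up_pair_def by blast

lemma wide_pair_sym: "wide_pair x y \<Longrightarrow> wide_pair y x"
  unfolding wide_pair_def by blast

lemma up_pair_Cons_append: "up_pair x y \<Longrightarrow> up_pair (l # x @ p) (l # y @ q)"
  unfolding up_pair_def by (metis branches_Cons_append)

lemma wide_pair_Cons_append: "wide_pair x y \<Longrightarrow> wide_pair (l # x @ p) (l # y @ q)"
  unfolding wide_pair_def by (metis branches_Cons_append)

lemma up_pair_not_wide_pair: "up_pair x y \<Longrightarrow> \<not> wide_pair x y"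
proof
  have exclusive: "\<not> (branches u v (i, 0) (i, 1) \<and> branches u v (0, a) (1, b))"
    and exclusive': "\<not> (branches u v (i, 0) (i, 1) \<and> branches u v (1, b) (0, a))"
    for u v :: "(nat \<times> nat) list" and i a b
    using branches_unique[of u v "(i, 0)" "(i, 1)"] by auto
  assume "up_pair x y" "wide_pair x y"
  then show False
    unfolding up_pair_def wide_pair_def using exclusive exclusive' branches_swap by metis
qed

lemma seqs_Cons_split:
  assumes "\<tau> @ c # r \<in> seqs d"
  shows "\<tau> \<in> seqs_lt d" and "c \<in> two2"
  using assms unfolding seqs_def seqs_lt_def by auto

lemma up_comb_nonempty: "up_comb d A \<Longrightarrow> A \<noteq> {}"
  by (induction rule: up_comb.induct) auto

lemma right_comb_nonempty: "right_comb d A \<Longrightarrow> A \<noteq> {}"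
  by (induction rule: right_comb.induct) auto

lemma up_comb_pair_iff:
  assumes x: "x \<in> seqs d" and y: "y \<in> seqs d" and "x \<noteq> y"
  shows "up_comb d {x, y} \<longleftrightarrow> up_pair x y"
proof
  assume "up_comb d {x, y}"
  then show "up_pair x y"
  proof cases
    case (step A B)
    obtain a b where ab: "a \<in> A" "b \<in> B"
      using up_comb_nonempty step(2,3) by blast
    from step(5) obtain i where "branches a b (i, 0) (i, 1)"
      unfolding narrowly_below_def branches_iff_prefixes using ab by blast
    moreover from this have "a \<noteq> b" by (rule branches_neq) simp
    moreover have "{a, b} \<subseteq> {x, y}" using ab step(1) by blast
    ultimately show ?thesis unfolding up_pair_def using \<open>x \<noteq> y\<close> by blast
  qed (use \<open>x \<noteq> y\<close> in auto)
next
  have up_comb_branches: "up_comb d {u, v}"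
    if u: "u \<in> seqs d" and v: "v \<in> seqs d" and "branches u v (i, 0) (i, 1)" for u v i
  proof -
    obtain \<tau> r s where uv: "u = \<tau> @ (i, 0) # r" "v = \<tau> @ (i, 1) # s"
      using \<open>branches u v (i, 0) (i, 1)\<close> unfolding branches_def by blast
    have "\<tau> \<in> seqs_lt d" "i < 2"
      using seqs_Cons_split[of \<tau> "(i, 0)" r d] u uv by (auto simp: two2_def)
    then have "narrowly_below d {u} {v}"
      unfolding narrowly_below_def prefix_def using uv by auto
    then have "up_comb d ({u} \<union> {v})"
      using u v by (intro up_comb.step up_comb.single) auto
    then show ?thesis by (simp add: insert_commute)
  qed
  assume "up_pair x y"
  then show "up_comb d {x, y}"
    unfolding up_pair_def using up_comb_branches[OF x y] up_comb_branches[OF y x]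
    by (metis insert_commute)
qed

lemma wide_right_comb_pair_iff:
  assumes x: "x \<in> seqs d" and y: "y \<in> seqs d" and "x \<noteq> y"
  shows "wide_right_comb d {x, y} \<longleftrightarrow> wide_pair x y"
proof
  assume "wide_right_comb d {x, y}"
  then show "wide_pair x y"
  proof cases
    case (step A B)
    obtain a b where ab: "a \<in> A" "b \<in> B"
      using right_comb_nonempty step(2,3) by blast
    from step(5) obtain \<sigma> where
      "prefix (\<sigma> @ [(0, 0)]) a \<or> prefix (\<sigma> @ [(0, 1)]) a"
      "prefix (\<sigma> @ [(1, 0)]) b \<or> prefix (\<sigma> @ [(1, 1)]) b"
      unfolding widely_left_def using ab by blast
    then obtain j k where "branches a b (0, j) (1, k)"
      unfolding branches_iff_prefixes by blast
    moreover from this have "a \<noteq> b" by (rule branches_neq) simp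
    moreover have "{a, b} \<subseteq> {x, y}" using ab step(1) by blast
    ultimately show ?thesis unfolding wide_pair_def using \<open>x \<noteq> y\<close> by blast
  qed (use \<open>x \<noteq> y\<close> in auto)
next
  have wide_right_comb_branches: "wide_right_comb d {u, v}"
    if u: "u \<in> seqs d" and v: "v \<in> seqs d" and "branches u v (0, j) (1, k)" for u v j k
  proof -
    obtain \<sigma> r s where uv: "u = \<sigma> @ (0, j) # r" "v = \<sigma> @ (1, k) # s"
      using \<open>branches u v (0, j) (1, k)\<close> unfolding branches_def by blast
    have "\<sigma> \<in> seqs_lt d" "j < 2" "k < 2"
      using seqs_Cons_split[of \<sigma> "(0, j)" r d] seqs_Cons_split[of \<sigma> "(1, k)" s d] u v uv
      by (auto simp: two2_def)
    then have "widely_left d {u} {v}"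
      unfolding widely_left_def prefix_def using uv less_2_cases by auto
    then have "wide_right_comb d ({u} \<union> {v})"
      using u v by (intro wide_right_comb.step right_comb.single) auto
    then show ?thesis by (simp add: insert_commute)
  qed
  assume "wide_pair x y"
  then show "wide_right_comb d {x, y}"
    unfolding wide_pair_def using wide_right_comb_branches[OF x y] wide_right_comb_branches[OF y x]
    by (metis insert_commute)
qed

lemma seqs_Cons_append_padding:
  "c \<in> two2 \<Longrightarrow> x \<in> seqs m \<Longrightarrow> c # x @ replicate n (0, 0) \<in> seqs (Suc (m + n))"
  unfolding seqs_def two2_def by auto

definition comb_embedding ::
    "'a set \<Rightarrow> 'a set set \<Rightarrow> nat \<Rightarrow> ('a \<Rightarrow> (nat \<times> nat) list) \<Rightarrow> bool" where
  "comb_embedding V E d f \<longleftrightarrow> inj_on f V \<and> f ` V \<subseteq> seqs d \<and>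
     (\<forall>v\<in>V. \<forall>w\<in>V. v \<noteq> w \<longrightarrow>
        ({v, w} \<in> E \<longrightarrow> up_pair (f v) (f w)) \<and> ({v, w} \<notin> E \<longrightarrow> wide_pair (f v) (f w)))"

lemma comb_embedding_union:
  assumes disjoint: "V0 \<inter> V1 = {}"
    and emb0: "comb_embedding V0 E0 d0 f0" and emb1: "comb_embedding V1 E1 d1 f1"
    and letters: "c0 \<in> two2" "c1 \<in> two2" "c0 \<noteq> c1"
    and edges0: "\<And>v w. v \<in> V0 \<Longrightarrow> w \<in> V0 \<Longrightarrow> {v, w} \<in> E \<longleftrightarrow> {v, w} \<in> E0"
    and edges1: "\<And>v w. v \<in> V1 \<Longrightarrow> w \<in> V1 \<Longrightarrow> {v, w} \<in> E \<longleftrightarrow> {v, w} \<in> E1"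
    and cross: "\<And>v w p q. v \<in> V0 \<Longrightarrow> w \<in> V1 \<Longrightarrow>
        ({v, w} \<in> E \<longrightarrow> up_pair (c0 # p) (c1 # q)) \<and>
        ({v, w} \<notin> E \<longrightarrow> wide_pair (c0 # p) (c1 # q))"
  shows "comb_embedding (V0 \<union> V1) E (Suc (d0 + d1)) (\<lambda>v.
           if v \<in> V0 then c0 # f0 v @ replicate d1 (0, 0) else c1 # f1 v @ replicate d0 (0, 0))"
    (is "comb_embedding _ _ _ ?f")
proof -
  have "inj_on ?f (V0 \<union> V1)"
    using emb0 emb1 letters(3) disjoint
    unfolding comb_embedding_def inj_on_def by auto
  moreover have "?f ` (V0 \<union> V1) \<subseteq> seqs (Suc (d0 + d1))"
  proof (rule image_subsetI)
    fix v assume "v \<in> V0 \<union> V1"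
    moreover have "f0 ` V0 \<subseteq> seqs d0" "f1 ` V1 \<subseteq> seqs d1"
      using emb0 emb1 unfolding comb_embedding_def by blast+
    ultimately show "?f v \<in> seqs (Suc (d0 + d1))"
      using seqs_Cons_append_padding[OF letters(1), of _ d0 d1]
        seqs_Cons_append_padding[OF letters(2), of _ d1 d0]
      by (auto simp: add.commute)
  qed
  moreover have "({v, w} \<in> E \<longrightarrow> up_pair (?f v) (?f w)) \<and>
      ({v, w} \<notin> E \<longrightarrow> wide_pair (?f v) (?f w))"
    if v: "v \<in> V0 \<union> V1" and w: "w \<in> V0 \<union> V1" and "v \<noteq> w" for v w
  proof -
    consider "v \<in> V0" "w \<in> V0" | "v \<in> V1" "w \<in> V1" | "v \<in> V0" "w \<in> V1"
      | "v \<in> V1" "w \<in> V0"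
      using v w by blast
    then show ?thesis
    proof cases
      case 1
      then have "({v, w} \<in> E0 \<longrightarrow> up_pair (f0 v) (f0 w)) \<and>
          ({v, w} \<notin> E0 \<longrightarrow> wide_pair (f0 v) (f0 w))"
        using emb0 \<open>v \<noteq> w\<close> unfolding comb_embedding_def by blast
      then show ?thesis
        using 1 edges0[OF 1] up_pair_Cons_append wide_pair_Cons_append by simp
    next
      case 2
      then have "({v, w} \<in> E1 \<longrightarrow> up_pair (f1 v) (f1 w)) \<and>
          ({v, w} \<notin> E1 \<longrightarrow> wide_pair (f1 v) (f1 w))"
        using emb1 \<open>v \<noteq> w\<close> unfolding comb_embedding_def by blast
      moreover have "v \<notin> V0" "w \<notin> V0" using 2 disjoint by blast+
      ultimately show ?thesis
        using 2 edges1[OF 2] up_pair_Cons_append wide_pair_Cons_append by simp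
    next
      case 3
      then show ?thesis using cross disjoint by auto
    next
      case 4
      then show ?thesis using cross[of w v] disjoint up_pair_sym wide_pair_sym
        by (auto simp: insert_commute)
    qed
  qed
  ultimately show ?thesis unfolding comb_embedding_def by blast
qed

lemma cograph_edge_subset: "cograph V E \<Longrightarrow> e \<in> E \<Longrightarrow> e \<subseteq> V"
  by (induction rule: cograph.induct) (auto simp: coproduct_edges_def join_edges_def)

lemma edge_notin_other_part:
  "cograph V1 E1 \<Longrightarrow> V0 \<inter> V1 = {} \<Longrightarrow> v \<in> V0 \<Longrightarrow> {v, w} \<notin> E1 \<and> {w, v} \<notin> E1"
  using cograph_edge_subset by blast

lemma doubleton_neq_cross:
  "V0 \<inter> V1 = {} \<Longrightarrow> v \<in> V0 \<and> w \<in> V0 \<or> v \<in> V1 \<and> w \<in> V1 \<Longrightarrow>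
     {v, w} \<notin> {{a, b} | a b. a \<in> V0 \<and> b \<in> V1}"
  by (auto simp: doubleton_eq_iff)

lemma cograph_comb_embedding: "cograph V E \<Longrightarrow> \<exists>d f. comb_embedding V E d f"
proof (induction rule: cograph.induct)
  case (single v)
  have "comb_embedding {v} {} 0 (\<lambda>_. [])" unfolding comb_embedding_def seqs_def by auto
  then show ?case by blast
next
  case (coprod V0 E0 V1 E1)
  obtain d0 f0 d1 f1 where emb: "comb_embedding V0 E0 d0 f0" "comb_embedding V1 E1 d1 f1"
    using coprod.IH by blast
  have letters: "(0, 0) \<in> two2" "(1, 0) \<in> two2" "(0, 0) \<noteq> (1::nat, 0::nat)"
    by (auto simp: two2_def)
  have disjoint': "V1 \<inter> V0 = {}" using coprod.hyps(3) by blast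
  note no_edge0 = edge_notin_other_part[OF coprod.hyps(1) disjoint']
    and no_edge1 = edge_notin_other_part[OF coprod.hyps(2) coprod.hyps(3)]
  have "wide_pair ((0, 0) # p) ((1, 0) # q)" for p q
    unfolding wide_pair_def using branches_Cons[of "(0, 0)" p "(1, 0)" q] by blast
  then show ?case
    using comb_embedding_union[OF coprod.hyps(3) emb letters, of "coproduct_edges E0 E1"]
      no_edge0 no_edge1 by (simp add: coproduct_edges_def) blast
next
  case (join V0 E0 V1 E1)
  obtain d0 f0 d1 f1 where emb: "comb_embedding V0 E0 d0 f0" "comb_embedding V1 E1 d1 f1"
    using join.IH by blast
  have letters: "(0, 0) \<in> two2" "(0, 1) \<in> two2" "(0, 0) \<noteq> (0::nat, 1::nat)"
    by (auto simp: two2_def)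
  have disjoint': "V1 \<inter> V0 = {}" using join.hyps(3) by blast
  note no_edge0 = edge_notin_other_part[OF join.hyps(1) disjoint']
    and no_edge1 = edge_notin_other_part[OF join.hyps(2) join.hyps(3)]
    and no_cross_edge = doubleton_neq_cross[OF join.hyps(3)]
  have edges0: "{v, w} \<in> join_edges V0 E0 V1 E1 \<longleftrightarrow> {v, w} \<in> E0"
    if "v \<in> V0" "w \<in> V0" for v w
    using no_edge1[OF that(1)] no_cross_edge[of v w] that
    unfolding join_edges_def Un_iff by blast
  have edges1: "{v, w} \<in> join_edges V0 E0 V1 E1 \<longleftrightarrow> {v, w} \<in> E1"
    if "v \<in> V1" "w \<in> V1" for v w
    using no_edge0[OF that(1)] no_cross_edge[of v w] that
    unfolding join_edges_def Un_iff by blast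
  have "up_pair ((0, 0) # p) ((0, 1) # q)" for p q
    unfolding up_pair_def using branches_Cons[of "(0, 0)" p "(0, 1)" q] by blast
  moreover have "{v, w} \<in> join_edges V0 E0 V1 E1" if "v \<in> V0" "w \<in> V1" for v w
    using that unfolding join_edges_def by blast
  ultimately show ?case
    using comb_embedding_union[OF join.hyps(3) emb letters edges0 edges1] by blast
qed

theorem lemma4p6:
  fixes V :: "'a set" and E :: "'a set set"
  assumes "cograph V E"
  shows "\<exists>(d::nat) (f :: 'a \<Rightarrow> (nat \<times> nat) list).
           inj_on f V \<and> f ` V \<subseteq> seqs d \<and>
           (\<forall>v0\<in>V. \<forall>v1\<in>V. v0 \<noteq> v1 \<longrightarrow>
              (({v0, v1} \<in> E) \<longleftrightarrow> up_comb d {f v0, f v1}) \<and>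
              (({v0, v1} \<notin> E) \<longleftrightarrow> wide_right_comb d {f v0, f v1}))"
proof -
  obtain d f where emb: "comb_embedding V E d f"
    using cograph_comb_embedding[OF assms] by blast
  then have inj: "inj_on f V" and seqs: "f ` V \<subseteq> seqs d"
    unfolding comb_embedding_def by blast+
  have "({v0, v1} \<in> E \<longleftrightarrow> up_comb d {f v0, f v1}) \<and>
        ({v0, v1} \<notin> E \<longleftrightarrow> wide_right_comb d {f v0, f v1})"
    if "v0 \<in> V" "v1 \<in> V" "v0 \<noteq> v1" for v0 v1
  proof -
    have "f v0 \<in> seqs d" "f v1 \<in> seqs d" "f v0 \<noteq> f v1"
      using that inj seqs by (auto dest: inj_onD)
    moreover have "({v0, v1} \<in> E \<longrightarrow> up_pair (f v0) (f v1)) \<and>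
        ({v0, v1} \<notin> E \<longrightarrow> wide_pair (f v0) (f v1))"
      using emb that unfolding comb_embedding_def by blast
    ultimately show ?thesis
      using up_comb_pair_iff wide_right_comb_pair_iff up_pair_not_wide_pair by blast
  qed
  with inj seqs show ?thesis by blast
qed

end
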